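(* Let $H$ be a finite simple connected graph such that $\mathscr{C}(H)$ is an accessible set system. Let $n,\ell$ be integers with $n\geq 2$ and $1\leq \ell<n$, and let $G:=K_n\circ_\ell H$. Then $\mathscr{C}(G)$ is an accessible set system.
   Context: For a graph $\Gamma$ and $A\subseteq V(\Gamma)$, $\omega(\Gamma\setminus A)$ is the number of connected components of the induced subgraph on $V(\Gamma)\setminus A$. A subset $T\subseteq V(\Gamma)$ is a cutset if $T=\emptyset$ or, for every $v\in T$, $\omega(\Gamma\setminus (T\setminus\{v\}))<\omega(\Gamma\setminus T)$; $\mathscr{C}(\Gamma)$ is the set of cutsets. $\mathscr{C}(\Gamma)$ is an accessible set system if for every non-empty $T\in\mathscr{C}(\Gamma)$ there is $t\in T$ with $T\setminus\{t\}\in\mathscr{C}(\Gamma)$. $K_n$ is the complete graph on $n$ vertices. For a subset $L\subseteq V(K_n)$ with $|L|=\ell$, $K_n\circ_\ell H$ denotes the graph obtained from $K_n$ by taking, for each $v\in L$, a disjoint copy $H_v$ of $H$ and joining $v$ to every vertex of $H_v$ (up to isomorphism this does not depend on the choice of $L$). *)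

theory Defs
  imports Main
begin

definition simple_graph :: "'a set \<Rightarrow> 'a set set \<Rightarrow> bool" where
  "simple_graph V E \<longleftrightarrow> finite V \<and>
     (\<forall>e\<in>E. \<exists>u v. e = {u, v} \<and> u \<noteq> v \<and> u \<in> V \<and> v \<in> V)"

definition conn_rel :: "'a set set \<Rightarrow> 'a set \<Rightarrow> ('a \<times> 'a) set" where
  "conn_rel E S = ({(x, y). x \<in> S \<and> y \<in> S \<and> {x, y} \<in> E})\<^sup>* \<inter> (S \<times> S)"

definition num_comp :: "'a set \<Rightarrow> 'a set set \<Rightarrow> 'a set \<Rightarrow> nat" where
  "num_comp V E A = card ((V - A) // conn_rel E (V - A))"

definition connected_graph :: "'a set \<Rightarrow> 'a set set \<Rightarrow> bool" where
  "connected_graph V E \<longleftrightarrow> V \<noteq> {} \<and> num_comp V E {} = 1"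

definition is_cutset :: "'a set \<Rightarrow> 'a set set \<Rightarrow> 'a set \<Rightarrow> bool" where
  "is_cutset V E T \<longleftrightarrow> T \<subseteq> V \<and>
     (T = {} \<or> (\<forall>v\<in>T. num_comp V E (T - {v}) < num_comp V E T))"

definition cutsets :: "'a set \<Rightarrow> 'a set set \<Rightarrow> 'a set set" where
  "cutsets V E = {T. is_cutset V E T}"

definition accessible :: "'a set set \<Rightarrow> bool" where
  "accessible F \<longleftrightarrow> (\<forall>T\<in>F. T \<noteq> {} \<longrightarrow> (\<exists>t\<in>T. T - {t} \<in> F))"

text \<open>K_n \<circ>_l H with L = {0..<l}: vertices Inl i (i < n) of K_n, and
Inr (i, x) for the copy H_i of H attached to i < l.\<close>

definition corona_V :: "nat \<Rightarrow> nat \<Rightarrow> 'a set \<Rightarrow> (nat + nat \<times> 'a) set" where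
  "corona_V n l VH = Inl ` {0..<n} \<union> Inr ` ({0..<l} \<times> VH)"

definition corona_E :: "nat \<Rightarrow> nat \<Rightarrow> 'a set \<Rightarrow> 'a set set \<Rightarrow> (nat + nat \<times> 'a) set set" where
  "corona_E n l VH EH =
     {{Inl i, Inl j} | i j. i < n \<and> j < n \<and> i \<noteq> j}
   \<union> {{Inr (i, x), Inr (i, y)} | i x y. i < l \<and> {x, y} \<in> EH}
   \<union> {{Inl i, Inr (i, x)} | i x. i < l \<and> x \<in> VH}"

end

theory Submission
  imports Defs
begin

(* A set T is a cutset exactly when every vertex of T is adjacent to two different
   components of the complement of T: putting v back merges precisely the components
   that contain a neighbour of v.

   In G = K_n o_l H, once the hub i of a copy H_i lies in T, the components of G - T
   meeting H_i are exactly the components of H_i - T. Consequently T is a cutset of G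
   iff every hub in T keeps a vertex of its copy outside T, every copy vertex in T has
   its hub in T, and every trace T \<inter> H_i is a cutset of H; a hub outside L, which
   exists since l < n, supplies the second component next to a hub in T. A nonempty
   cutset of G thus stays a cutset after deleting, by accessibility of H, a suitable
   vertex of a nonempty trace, or any hub if all traces are empty. *)

section \<open>Cutsets through components next to a vertex\<close>

definition adj_rel :: "'a set set \<Rightarrow> 'a set \<Rightarrow> ('a \<times> 'a) set" where
  "adj_rel E S = {(x, y). x \<in> S \<and> y \<in> S \<and> {x, y} \<in> E}"

lemma conn_rel_adj_rel: "conn_rel E S = (adj_rel E S)\<^sup>* \<inter> S \<times> S"
  by (simp add: conn_rel_def adj_rel_def)

lemma equiv_conn_rel: "equiv S (conn_rel E S)"
proof (rule equivI)
  have "sym (adj_rel E S)"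
    by (auto simp: sym_def adj_rel_def insert_commute)
  then show "sym (conn_rel E S)"
    unfolding conn_rel_adj_rel by (auto intro!: symI dest: symD[OF sym_rtrancl])
  show "trans (conn_rel E S)"
    unfolding conn_rel_adj_rel trans_def by (auto intro: rtrancl_trans)
qed (auto simp: conn_rel_adj_rel refl_on_def)

lemma conn_rel_sym: "(x, y) \<in> conn_rel E S \<Longrightarrow> (y, x) \<in> conn_rel E S"
  by (meson equiv_conn_rel equiv_def symD)

lemma conn_rel_trans:
  "(x, y) \<in> conn_rel E S \<Longrightarrow> (y, z) \<in> conn_rel E S \<Longrightarrow> (x, z) \<in> conn_rel E S"
  by (meson equiv_conn_rel equiv_def transD)

lemma conn_rel_memD: "(x, y) \<in> conn_rel E S \<Longrightarrow> x \<in> S \<and> y \<in> S"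
  by (simp add: conn_rel_def)

lemma conn_rel_refl: "x \<in> S \<Longrightarrow> (x, x) \<in> conn_rel E S"
  by (simp add: conn_rel_def)

lemma conn_rel_edge: "x \<in> S \<Longrightarrow> y \<in> S \<Longrightarrow> {x, y} \<in> E \<Longrightarrow> (x, y) \<in> conn_rel E S"
  unfolding conn_rel_adj_rel by (auto simp: adj_rel_def)

lemma conn_rel_mono: "S \<subseteq> S' \<Longrightarrow> conn_rel E S \<subseteq> conn_rel E S'"
  unfolding conn_rel_adj_rel adj_rel_def by (auto elim!: rtrancl_mono[THEN subsetD, rotated])

lemma conn_rel_memDsert_subset:
  fixes E :: "'a set set"
  assumes "v \<notin> S"
  defines "C \<equiv> insert v (conn_rel E S `` {a \<in> S. {v, a} \<in> E})"
  shows "conn_rel E (insert v S) \<subseteq> conn_rel E S \<union> C \<times> C"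
proof clarify
  let ?R = "conn_rel E S"
  have C_closed: "z \<in> C" if y: "y \<in> C" and yz: "(y, z) \<in> ?R" for y z
  proof -
    have "y \<noteq> v" using assms(1) conn_rel_memD[OF yz] by auto
    then obtain a where "a \<in> S" "{v, a} \<in> E" "(a, y) \<in> ?R" using y by (auto simp: C_def)
    then show ?thesis using conn_rel_trans[OF _ yz] by (auto simp: C_def)
  qed
  fix x z assume xz: "(x, z) \<in> conn_rel E (insert v S)" and "(x, z) \<notin> ?R"
  have "(x, z) \<in> (adj_rel E (insert v S))\<^sup>*" and x: "x \<in> insert v S"
    using xz unfolding conn_rel_adj_rel by auto
  then have "(x, z) \<in> ?R \<union> C \<times> C"
  proof (induction z rule: rtrancl_induct)
    case base
    then show ?case by (auto simp: C_def conn_rel_refl)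
  next
    case (step y z)
    then have yz: "y \<in> insert v S" "z \<in> insert v S" "{y, z} \<in> E"
      unfolding adj_rel_def by auto
    consider "y = v" | "z = v" | "y \<noteq> v" "z \<noteq> v" by blast
    then show ?case
    proof cases
      case 1
      then have "(x, y) \<notin> ?R" using assms(1) conn_rel_memD[of x y] by auto
      then have "x \<in> C" using step.IH step.prems by blast
      moreover have "z \<in> C" using 1 yz conn_rel_refl by (fastforce simp: C_def)
      ultimately show ?thesis by blast
    next
      case 2
      then have "y \<in> C" using yz conn_rel_refl by (fastforce simp: C_def insert_commute)
      then have "x \<in> C" using step.IH step.prems C_closed[OF _ conn_rel_sym] by blast
      then show ?thesis using 2 by (auto simp: C_def)
    next
      case 3
      then have "(y, z) \<in> ?R" using yz by (auto intro: conn_rel_edge)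
      from step.IH step.prems consider "(x, y) \<in> ?R" | "x \<in> C" "y \<in> C" by blast
      then show ?thesis
        by cases (use conn_rel_trans[OF _ \<open>(y, z) \<in> ?R\<close>] C_closed[OF _ \<open>(y, z) \<in> ?R\<close>] in blast)+
    qed
  qed
  with \<open>(x, z) \<notin> ?R\<close> show "x \<in> C \<and> z \<in> C" by blast
qed

lemma conn_rel_memDsert:
  fixes E :: "'a set set"
  assumes "v \<notin> S"
  defines "C \<equiv> insert v (conn_rel E S `` {a \<in> S. {v, a} \<in> E})"
  shows "conn_rel E (insert v S) = conn_rel E S \<union> C \<times> C"
proof
  let ?R' = "conn_rel E (insert v S)"
  show "?R' \<subseteq> conn_rel E S \<union> C \<times> C"
    unfolding C_def using assms(1) by (rule conn_rel_memDsert_subset)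
  have v_conn: "(v, c) \<in> ?R'" if c: "c \<in> C" for c
  proof (cases "c = v")
    case True
    then show ?thesis by (simp add: conn_rel_refl)
  next
    case False
    then obtain a where a: "a \<in> S" "{v, a} \<in> E" "(a, c) \<in> conn_rel E S"
      using c by (auto simp: C_def)
    have "(v, a) \<in> ?R'" using a by (intro conn_rel_edge) auto
    moreover have "(a, c) \<in> ?R'" using a(3) conn_rel_mono[of S "insert v S"] by auto
    ultimately show ?thesis by (rule conn_rel_trans)
  qed
  have "C \<times> C \<subseteq> ?R'"
    using conn_rel_trans[OF conn_rel_sym[OF v_conn] v_conn] by blast
  then show "conn_rel E S \<union> C \<times> C \<subseteq> ?R'" using conn_rel_mono[of S "insert v S"] by auto
qed

lemma quotient_merge_classes:
  assumes eqv: "equiv S R" and "v \<notin> S" "N \<subseteq> S"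
  defines "C \<equiv> insert v (R `` N)"
  shows "insert v S // (R \<union> C \<times> C) = insert C {X \<in> S // R. X \<inter> N = {}}"
proof -
  let ?R' = "R \<union> C \<times> C"
  have R_sym: "(x, y) \<in> R \<Longrightarrow> (y, x) \<in> R" for x y
    using eqv by (meson equiv_def symD)
  have R_trans: "(x, y) \<in> R \<Longrightarrow> (y, z) \<in> R \<Longrightarrow> (x, z) \<in> R" for x y z
    using eqv by (meson equiv_def transD)
  have R_in: "(x, y) \<in> R \<Longrightarrow> x \<in> S \<and> y \<in> S" for x y
    using equiv_type[OF eqv] by blast
  have class_C: "?R' `` {x} = C" if "x \<in> C" for x
  proof -
    have "R `` {x} \<subseteq> C" using that R_trans R_in \<open>v \<notin> S\<close> unfolding C_def by blast
    then show ?thesis using that by auto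
  qed
  have class_other: "?R' `` {x} = R `` {x}" "R `` {x} \<inter> N = {}" if "x \<notin> C" for x
    using that R_sym unfolding C_def by blast+
  have rest_class: "\<exists>x\<in>S - C. X = R `` {x}" if X: "X \<in> S // R" "X \<inter> N = {}" for X
  proof -
    obtain x where x: "X = R `` {x}" "x \<in> S" using X(1) by (rule quotientE)
    have "x \<notin> C" using x X(2) \<open>v \<notin> S\<close> R_sym unfolding C_def by blast
    then show ?thesis using x by blast
  qed
  show ?thesis
  proof
    show "insert v S // ?R' \<subseteq> insert C {X \<in> S // R. X \<inter> N = {}}"
    proof
      fix X assume "X \<in> insert v S // ?R'"
      then obtain x where x: "X = ?R' `` {x}" "x \<in> insert v S" by (rule quotientE)
      show "X \<in> insert C {X \<in> S // R. X \<inter> N = {}}"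
      proof (cases "x \<in> C")
        case False
        then have "x \<in> S" using x(2) by (auto simp: C_def)
        then show ?thesis using x(1) class_other[OF False] by (auto intro: quotientI)
      qed (use x class_C in blast)
    qed
    have "C \<in> insert v S // ?R'" using class_C[of v] unfolding quotient_def C_def by blast
    moreover have "X \<in> insert v S // ?R'" if "X \<in> S // R" "X \<inter> N = {}" for X
      using rest_class[OF that] class_other unfolding quotient_def by blast
    ultimately show "insert C {X \<in> S // R. X \<inter> N = {}} \<subseteq> insert v S // ?R'" by blast
  qed
qed

lemma card_quotient_merge_classes_less_iff:
  assumes "finite S" and eqv: "equiv S R" and "v \<notin> S" "N \<subseteq> S"
  defines "C \<equiv> insert v (R `` N)"
  shows "card (insert v S // (R \<union> C \<times> C)) < card (S // R) \<longleftrightarrow> (\<exists>a\<in>N. \<exists>b\<in>N. (a, b) \<notin> R)"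
proof -
  let ?touched = "{X \<in> S // R. X \<inter> N \<noteq> {}}" and ?rest = "{X \<in> S // R. X \<inter> N = {}}"
  have fin: "finite (S // R)" using assms(1) equiv_type[OF eqv] by (rule finite_quotient)
  have "C \<notin> ?rest" using in_quotient_imp_subset[OF eqv] \<open>v \<notin> S\<close> by (auto simp: C_def)
  then have card_new: "card (insert v S // (R \<union> C \<times> C)) = Suc (card ?rest)"
    using quotient_merge_classes[OF assms(2-4)] fin by (simp add: C_def)
  have "card (?touched \<union> ?rest) = card ?touched + card ?rest"
    using fin by (intro card_Un_disjoint) auto
  moreover have "?touched \<union> ?rest = S // R" by blast
  ultimately have card_old: "card (S // R) = card ?touched + card ?rest" by simp
  have touched: "?touched = (\<lambda>a. R `` {a}) ` N"
  proof
    show "?touched \<subseteq> (\<lambda>a. R `` {a}) ` N"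
    proof
      fix X assume "X \<in> ?touched"
      then obtain a where "X \<in> S // R" "a \<in> X" "a \<in> N" by blast
      then have "X = R `` {a}" by (metis eqv Image_singleton_iff quotientE equiv_class_eq)
      then show "X \<in> (\<lambda>a. R `` {a}) ` N" using \<open>a \<in> N\<close> by blast
    qed
    show "(\<lambda>a. R `` {a}) ` N \<subseteq> ?touched"
      using \<open>N \<subseteq> S\<close> equiv_class_self[OF eqv] by (auto intro: quotientI)
  qed
  have "finite N" using assms(1,4) by (rule finite_subset[rotated])
  then have "card ?touched \<le> Suc 0 \<longleftrightarrow> (\<forall>a\<in>N. \<forall>b\<in>N. R `` {a} = R `` {b})"
    unfolding touched by (simp add: card_le_Suc0_iff_eq)
  also have "\<dots> \<longleftrightarrow> (\<forall>a\<in>N. \<forall>b\<in>N. (a, b) \<in> R)"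
    using \<open>N \<subseteq> S\<close> eq_equiv_class_iff[OF eqv] by blast
  finally show ?thesis unfolding card_new card_old by auto
qed

definition joins_components :: "'a set \<Rightarrow> 'a set set \<Rightarrow> 'a set \<Rightarrow> 'a \<Rightarrow> bool" where
  "joins_components V E T v \<longleftrightarrow>
     (\<exists>a\<in>V - T. \<exists>b\<in>V - T. {v, a} \<in> E \<and> {v, b} \<in> E \<and> (a, b) \<notin> conn_rel E (V - T))"

lemma num_comp_remove_less_iff:
  assumes "finite V" "v \<in> T" "T \<subseteq> V"
  shows "num_comp V E (T - {v}) < num_comp V E T \<longleftrightarrow> joins_components V E T v"
proof -
  let ?S = "V - T"
  have "V - (T - {v}) = insert v ?S" and v: "v \<notin> ?S" using assms by auto
  then have "num_comp V E (T - {v}) < num_comp V E T \<longleftrightarrow>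
      card (insert v ?S // conn_rel E (insert v ?S)) < card (?S // conn_rel E ?S)"
    by (simp add: num_comp_def)
  also have "\<dots> \<longleftrightarrow> joins_components V E T v"
    unfolding conn_rel_memDsert[OF v] joins_components_def
    using card_quotient_merge_classes_less_iff[OF _ equiv_conn_rel v, of "{a \<in> ?S. {v, a} \<in> E}"]
      assms(1) by blast
  finally show ?thesis .
qed

lemma is_cutset_iff_joins_components:
  assumes "finite V"
  shows "is_cutset V E T \<longleftrightarrow> T \<subseteq> V \<and> (\<forall>v\<in>T. joins_components V E T v)"
  using num_comp_remove_less_iff[OF assms] unfolding is_cutset_def by auto

section \<open>Cutsets of the corona K_n o_l H\<close>

lemma mem_corona_V [simp]:
  "Inl i \<in> corona_V n l VH \<longleftrightarrow> i < n"
  "Inr (i, x) \<in> corona_V n l VH \<longleftrightarrow> i < l \<and> x \<in> VH"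
  by (auto simp: corona_V_def)

lemma mem_corona_E [simp]:
  "{Inl i, Inl j} \<in> corona_E n l VH EH \<longleftrightarrow> i < n \<and> j < n \<and> i \<noteq> j"
  "{Inl i, Inr (k, y)} \<in> corona_E n l VH EH \<longleftrightarrow> k = i \<and> i < l \<and> y \<in> VH"
  "{Inr (k, y), Inl i} \<in> corona_E n l VH EH \<longleftrightarrow> k = i \<and> i < l \<and> y \<in> VH"
  "{Inr (i, x), Inr (k, y)} \<in> corona_E n l VH EH \<longleftrightarrow> k = i \<and> i < l \<and> {x, y} \<in> EH"
  by (auto simp: corona_E_def doubleton_eq_iff insert_commute)

definition copy_trace :: "(nat + nat \<times> 'a) set \<Rightarrow> nat \<Rightarrow> 'a set" where
  "copy_trace T i = {x. Inr (i, x) \<in> T}"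

lemma conn_rel_corona_Inr_iff:
  assumes "Inl j \<in> T" "j < l"
  shows "(Inr (j, a), w) \<in> conn_rel (corona_E n l VH EH) (corona_V n l VH - T) \<longleftrightarrow>
    (\<exists>b. w = Inr (j, b) \<and> (a, b) \<in> conn_rel EH (VH - copy_trace T j))"
proof -
  let ?A = "adj_rel (corona_E n l VH EH) (corona_V n l VH - T)"
  let ?B = "adj_rel EH (VH - copy_trace T j)"
  have adj: "(Inr (j, y), z) \<in> ?A \<longleftrightarrow> (\<exists>c. z = Inr (j, c) \<and> (y, c) \<in> ?B)" for y z
    using assms by (cases z) (auto simp: adj_rel_def copy_trace_def)
  have to_H: "\<exists>b. w = Inr (j, b) \<and> (a, b) \<in> ?B\<^sup>*" if "(Inr (j, a), w) \<in> ?A\<^sup>*"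
    using that by (induction rule: rtrancl_induct) (auto simp: adj intro: rtrancl_into_rtrancl)
  have to_G: "(Inr (j, a), Inr (j, b)) \<in> ?A\<^sup>*" if "(a, b) \<in> ?B\<^sup>*" for b
    using that by (induction rule: rtrancl_induct) (auto simp: adj intro: rtrancl_into_rtrancl)
  have "Inr (j, y) \<in> corona_V n l VH - T \<longleftrightarrow> y \<in> VH - copy_trace T j" for y
    using assms(2) by (simp add: copy_trace_def)
  then show ?thesis
    unfolding conn_rel_adj_rel using to_H to_G by blast
qed

lemma joins_components_corona_InlD:
  assumes "joins_components (corona_V n l VH) (corona_E n l VH EH) T (Inl j)"
  shows "\<exists>y. Inr (j, y) \<in> corona_V n l VH - T"
proof (rule ccontr)
  assume no_copy_vertex: "\<nexists>y. Inr (j, y) \<in> corona_V n l VH - T"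
  obtain a b where ab: "a \<in> corona_V n l VH - T" "b \<in> corona_V n l VH - T"
    "{Inl j, a} \<in> corona_E n l VH EH" "{Inl j, b} \<in> corona_E n l VH EH"
    "(a, b) \<notin> conn_rel (corona_E n l VH EH) (corona_V n l VH - T)"
    using assms unfolding joins_components_def by blast
  have "\<exists>k. w = Inl k" if "w \<in> corona_V n l VH - T" "{Inl j, w} \<in> corona_E n l VH EH" for w
    using that no_copy_vertex by (cases w) auto
  then obtain ka kb where "a = Inl ka" "b = Inl kb" using ab by blast
  then have "(a, b) \<in> conn_rel (corona_E n l VH EH) (corona_V n l VH - T)"
    using ab(1,2) by (cases "ka = kb") (auto intro: conn_rel_refl conn_rel_edge)
  with ab(5) show False ..
qed

lemma joins_components_corona_InlI:
  assumes "l \<le> n" "Inl j \<in> T" "Inr (j, y) \<in> corona_V n l VH - T" "Inl k \<in> corona_V n l VH - T"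
  shows "joins_components (corona_V n l VH) (corona_E n l VH EH) T (Inl j)"
proof -
  have "j < l" using assms(3) by simp
  then have "{Inl j, Inr (j, y)} \<in> corona_E n l VH EH" "{Inl j, Inl k} \<in> corona_E n l VH EH"
    using assms by auto
  moreover have "(Inr (j, y), Inl k) \<notin> conn_rel (corona_E n l VH EH) (corona_V n l VH - T)"
    using conn_rel_corona_Inr_iff[OF assms(2) \<open>j < l\<close>] by blast
  ultimately show ?thesis
    unfolding joins_components_def using assms(3,4) by blast
qed

lemma joins_components_corona_InrD:
  assumes "l \<le> n" and "joins_components (corona_V n l VH) (corona_E n l VH EH) T (Inr (i, x))"
  shows "Inl i \<in> T \<and> joins_components VH EH (copy_trace T i) x"
proof -
  let ?V = "corona_V n l VH" and ?E = "corona_E n l VH EH"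
  obtain a b where ab: "a \<in> ?V - T" "b \<in> ?V - T" "{Inr (i, x), a} \<in> ?E" "{Inr (i, x), b} \<in> ?E"
    "(a, b) \<notin> conn_rel ?E (?V - T)"
    using assms(2) unfolding joins_components_def by blast
  have nbr: "i < l \<and> (w = Inl i \<or> (\<exists>c. w = Inr (i, c) \<and> {x, c} \<in> EH))"
    if "{Inr (i, x), w} \<in> ?E" for w
    using that by (cases w) auto
  have "i < l" using nbr[OF ab(3)] by blast
  have "Inl i \<in> T"
  proof (rule ccontr)
    assume "Inl i \<notin> T"
    then have to_hub: "(w, Inl i) \<in> conn_rel ?E (?V - T)"
      if "w \<in> ?V - T" "{Inr (i, x), w} \<in> ?E" for w
      using nbr[OF that(2)] that(1) \<open>i < l\<close> assms(1) by (auto intro: conn_rel_refl conn_rel_edge)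
    have "(a, b) \<in> conn_rel ?E (?V - T)"
      using conn_rel_trans[OF to_hub[OF ab(1,3)] conn_rel_sym[OF to_hub[OF ab(2,4)]]] .
    with ab(5) show False ..
  qed
  then have copy_nbr: "\<exists>c. w = Inr (i, c) \<and> {x, c} \<in> EH"
    if "w \<in> ?V - T" "{Inr (i, x), w} \<in> ?E" for w
    using nbr[OF that(2)] that(1) by auto
  obtain a' b' where a': "a = Inr (i, a')" "{x, a'} \<in> EH" and b': "b = Inr (i, b')" "{x, b'} \<in> EH"
    using copy_nbr[OF ab(1,3)] copy_nbr[OF ab(2,4)] by blast
  have "a' \<in> VH - copy_trace T i" "b' \<in> VH - copy_trace T i"
    using ab(1,2) a'(1) b'(1) by (simp_all add: copy_trace_def)
  moreover have "(a', b') \<notin> conn_rel EH (VH - copy_trace T i)"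
    using conn_rel_corona_Inr_iff[OF \<open>Inl i \<in> T\<close> \<open>i < l\<close>] ab(5) a'(1) b'(1) by blast
  ultimately show ?thesis
    using \<open>Inl i \<in> T\<close> a'(2) b'(2) unfolding joins_components_def by blast
qed

lemma joins_components_corona_InrI:
  assumes "Inl j \<in> T" "j < l" "joins_components VH EH (copy_trace T j) x"
  shows "joins_components (corona_V n l VH) (corona_E n l VH EH) T (Inr (j, x))"
proof -
  obtain a b where ab: "a \<in> VH - copy_trace T j" "b \<in> VH - copy_trace T j"
    "{x, a} \<in> EH" "{x, b} \<in> EH" "(a, b) \<notin> conn_rel EH (VH - copy_trace T j)"
    using assms(3) unfolding joins_components_def by blast
  have "Inr (j, a) \<in> corona_V n l VH - T" "Inr (j, b) \<in> corona_V n l VH - T"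
    using ab(1,2) assms(2) by (simp_all add: copy_trace_def)
  moreover have "{Inr (j, x), Inr (j, a)} \<in> corona_E n l VH EH" "{Inr (j, x), Inr (j, b)} \<in> corona_E n l VH EH"
    using ab(3,4) assms(2) by simp_all
  moreover have "(Inr (j, a), Inr (j, b)) \<notin> conn_rel (corona_E n l VH EH) (corona_V n l VH - T)"
    using ab(5) by (simp add: conn_rel_corona_Inr_iff[OF assms(1,2)])
  ultimately show ?thesis
    unfolding joins_components_def by blast
qed

lemma is_cutset_copy_trace_iff:
  assumes "finite VH" "T \<subseteq> corona_V n l VH"
  shows "is_cutset VH EH (copy_trace T i) \<longleftrightarrow>
    (\<forall>x\<in>copy_trace T i. joins_components VH EH (copy_trace T i) x)"
  using assms is_cutset_iff_joins_components[OF assms(1)] by (auto simp: copy_trace_def)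

lemma is_cutset_coronaD:
  assumes "finite VH" "l \<le> n" "is_cutset (corona_V n l VH) (corona_E n l VH EH) T"
  shows "T \<subseteq> corona_V n l VH"
    and "Inl j \<in> T \<Longrightarrow> \<exists>y. Inr (j, y) \<in> corona_V n l VH - T"
    and "Inr (i, x) \<in> T \<Longrightarrow> Inl i \<in> T"
    and "is_cutset VH EH (copy_trace T i)"
proof -
  have "finite (corona_V n l VH)" using assms(1) by (simp add: corona_V_def)
  then have T_in: "T \<subseteq> corona_V n l VH"
    and joins: "\<And>v. v \<in> T \<Longrightarrow> joins_components (corona_V n l VH) (corona_E n l VH EH) T v"
    using assms(3) is_cutset_iff_joins_components by blast+
  show "T \<subseteq> corona_V n l VH" by (fact T_in)
  show "Inl j \<in> T \<Longrightarrow> \<exists>y. Inr (j, y) \<in> corona_V n l VH - T"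
    using joins_components_corona_InlD[OF joins] .
  show "Inr (i, x) \<in> T \<Longrightarrow> Inl i \<in> T"
    using joins_components_corona_InrD[OF assms(2) joins] by blast
  show "is_cutset VH EH (copy_trace T i)"
    using joins_components_corona_InrD[OF assms(2) joins] is_cutset_copy_trace_iff[OF assms(1) T_in]
    by (simp add: copy_trace_def)
qed

lemma is_cutset_coronaI:
  assumes "finite VH" "l < n" "T \<subseteq> corona_V n l VH"
    and hubs: "\<And>j. Inl j \<in> T \<Longrightarrow> \<exists>y. Inr (j, y) \<in> corona_V n l VH - T"
    and copies: "\<And>i x. Inr (i, x) \<in> T \<Longrightarrow> Inl i \<in> T"
    and traces: "\<And>i. is_cutset VH EH (copy_trace T i)"
  shows "is_cutset (corona_V n l VH) (corona_E n l VH EH) T"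
proof -
  \<comment> \<open>hubs in T lie in L, which misses the hub n - 1 since l < n\<close>
  have free_hub: "Inl (n - 1) \<in> corona_V n l VH - T"
    using hubs[of "n - 1"] assms(2) by auto
  have "joins_components (corona_V n l VH) (corona_E n l VH EH) T v" if v_in: "v \<in> T" for v
  proof (cases v)
    case (Inl j)
    then obtain y where "Inr (j, y) \<in> corona_V n l VH - T" using hubs v_in by blast
    then show ?thesis
      using joins_components_corona_InlI[OF less_imp_le[OF assms(2)] _ _ free_hub] Inl v_in by blast
  next
    case (Inr p)
    then obtain i x where v: "v = Inr (i, x)" by (cases p) auto
    then have "Inl i \<in> T" "i < l" "x \<in> copy_trace T i"
      using copies assms(3) v_in by (auto simp: copy_trace_def)
    moreover have "joins_components VH EH (copy_trace T i) x"
      using traces is_cutset_copy_trace_iff[OF assms(1,3)] \<open>x \<in> copy_trace T i\<close> by blast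
    ultimately show ?thesis
      unfolding v by (intro joins_components_corona_InrI)
  qed
  moreover have "finite (corona_V n l VH)" using assms(1) by (simp add: corona_V_def)
  ultimately show ?thesis using assms(3) is_cutset_iff_joins_components by blast
qed

lemma is_cutset_corona_Diff_Inr:
  assumes "finite VH" "l < n"
    and "is_cutset (corona_V n l VH) (corona_E n l VH EH) T"
    and "is_cutset VH EH (copy_trace T i - {t})"
  shows "is_cutset (corona_V n l VH) (corona_E n l VH EH) (T - {Inr (i, t)})"
proof (rule is_cutset_coronaI[OF assms(1,2)])
  note T = is_cutset_coronaD[OF assms(1) less_imp_le[OF assms(2)] assms(3)]
  have "copy_trace (T - {Inr (i, t)}) k = (if k = i then copy_trace T i - {t} else copy_trace T k)" for k
    by (auto simp: copy_trace_def)
  then show "is_cutset VH EH (copy_trace (T - {Inr (i, t)}) k)" for k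
    using T(4) assms(4) by simp
qed (use is_cutset_coronaD[OF assms(1) less_imp_le[OF assms(2)] assms(3)] in blast)+

lemma is_cutset_corona_Diff_Inl:
  assumes "finite VH" "l < n"
    and "is_cutset (corona_V n l VH) (corona_E n l VH EH) T"
    and "\<forall>i x. Inr (i, x) \<notin> T"
  shows "is_cutset (corona_V n l VH) (corona_E n l VH EH) (T - {Inl j})"
proof (rule is_cutset_coronaI[OF assms(1,2)])
  have "copy_trace (T - {Inl j}) i = {}" for i
    using assms(4) by (simp add: copy_trace_def)
  then show "is_cutset VH EH (copy_trace (T - {Inl j}) i)" for i
    by (simp add: is_cutset_def)
qed (use assms(4) is_cutset_coronaD[OF assms(1) less_imp_le[OF assms(2)] assms(3)] in blast)+

theorem theorem3p10:
  fixes VH :: "'a set" and EH :: "'a set set" and n l :: nat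
  assumes "simple_graph VH EH"
    and "connected_graph VH EH"
    and "accessible (cutsets VH EH)"
    and "n \<ge> 2" and "1 \<le> l" and "l < n"
  shows "accessible (cutsets (corona_V n l VH) (corona_E n l VH EH))"
proof (unfold accessible_def, intro ballI impI)
  let ?G_cutset = "is_cutset (corona_V n l VH) (corona_E n l VH EH)"
  have fin: "finite VH" using assms(1) by (simp add: simple_graph_def)
  fix T assume "T \<in> cutsets (corona_V n l VH) (corona_E n l VH EH)" "T \<noteq> {}"
  then have T: "?G_cutset T" by (simp add: cutsets_def)
  show "\<exists>t\<in>T. T - {t} \<in> cutsets (corona_V n l VH) (corona_E n l VH EH)"
    unfolding cutsets_def mem_Collect_eq
  proof (cases "\<exists>i x. Inr (i, x) \<in> T")
    case True
    then obtain i x where "x \<in> copy_trace T i" by (auto simp: copy_trace_def)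
    moreover have "is_cutset VH EH (copy_trace T i)"
      using is_cutset_coronaD(4)[OF fin less_imp_le[OF assms(6)] T] .
    ultimately obtain t where "t \<in> copy_trace T i" "is_cutset VH EH (copy_trace T i - {t})"
      using assms(3) unfolding accessible_def cutsets_def by blast
    then show "\<exists>t\<in>T. ?G_cutset (T - {t})"
      using is_cutset_corona_Diff_Inr[OF fin assms(6) T] by (auto simp: copy_trace_def)
  next
    case False
    then obtain j where "Inl j \<in> T"
      using \<open>T \<noteq> {}\<close> by (metis equals0I sumE surj_pair)
    then show "\<exists>t\<in>T. ?G_cutset (T - {t})"
      using is_cutset_corona_Diff_Inl[OF fin assms(6) T] False by blast
  qed
qed

end
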